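(* Let $n\ge 1$ and $k\ge 3$ be integers. The number of vertices of the $k$-Pell graph $\Pi_{n,k}$ of degree $\Delta(\Pi_{n,k})-1=2n-1$ equals $$n\,(k-2)^{n-1}+\sum_{\ell=1}^{n}(n-\ell+1)\,(k-2)^{n-\ell}.$$
   Context: For an integer $k\ge 2$, a $k$-Pell string is a finite word over the alphabet $\{0,1,\ldots,k-1,kk\}$, i.e. a word over $\{0,1,\ldots,k\}$ in which every maximal run of the letter $k$ has even length. For $n\ge 0$, the $k$-Pell graph $\Pi_{n,k}$ has as vertices all $k$-Pell strings of length $n$, and two vertices are adjacent if one is obtained from the other either by replacing a single letter $i$ by $i+1$ (or vice versa) for some $i\in\{0,1,\ldots,k-2\}$, or by replacing one factor $(k-1)(k-1)$ by $kk$ (or vice versa), in such a way that the resulting string is again a $k$-Pell string. $\Delta(G)$ denotes the maximum degree of $G$. *)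

theory Defs
  imports Main
begin

text \<open>k-Pell strings: words over the alphabet {0,...,k-1, kk}, written as lists of
  naturals over {0,...,k} in which the letter k only occurs in blocks kk.\<close>
inductive pell_string :: "nat \<Rightarrow> nat list \<Rightarrow> bool" for k :: nat where
  Nil: "pell_string k []"
| Letter: "i < k \<Longrightarrow> pell_string k w \<Longrightarrow> pell_string k (i # w)"
| Double: "pell_string k w \<Longrightarrow> pell_string k (k # k # w)"

definition pell_vertices :: "nat \<Rightarrow> nat \<Rightarrow> nat list set" where
  "pell_vertices n k = {w. pell_string k w \<and> length w = n}"

definition pell_step :: "nat \<Rightarrow> nat list \<Rightarrow> nat list \<Rightarrow> bool" where
  "pell_step k u v \<longleftrightarrow>
     (\<exists>x y i. i + 2 \<le> k \<and> u = x @ [i] @ y \<and> v = x @ [i + 1] @ y)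
   \<or> (\<exists>x y. u = x @ [k - 1, k - 1] @ y \<and> v = x @ [k, k] @ y)"

definition pell_adj :: "nat \<Rightarrow> nat list \<Rightarrow> nat list \<Rightarrow> bool" where
  "pell_adj k u v \<longleftrightarrow> pell_string k u \<and> pell_string k v \<and>
     (pell_step k u v \<or> pell_step k v u)"

definition pell_degree :: "nat \<Rightarrow> nat \<Rightarrow> nat list \<Rightarrow> nat" where
  "pell_degree n k u = card {v \<in> pell_vertices n k. pell_adj k u v}"

definition pell_max_degree :: "nat \<Rightarrow> nat \<Rightarrow> nat" where
  "pell_max_degree n k = Max (pell_degree n k ` pell_vertices n k)"

end

theory Submission
  imports Defs
begin

text \<open>The degree of a k-Pell string is a sum of local contributions. A letter a < k
  contributes one neighbour for each of the moves a \<mapsto> a - 1 (if a > 0), a \<mapsto> a + 1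
  (if a \<le> k - 2) and, when a = k - 1 is followed by another k - 1, the merge into kk;
  a block kk contributes the single move back to (k-1)(k-1). Every position thus contributes
  at most 2, so the maximum degree is 2n, attained exactly by the words over {1, ..., k-2}.
  If B(n) counts the vertices of degree 2n - 1 and S(n) those among them that start with
  k - 1, sorting by the first letter gives B(n+1) = (k-2)^n + (k-2) B(n) + S(n+1) and
  S(n+1) = S(n) + (k-2)^n; the solution of these recurrences is the stated sum.\<close>

lemma pell_string_Cons:
  "pell_string k (a # w) \<longleftrightarrow>
     (a < k \<and> pell_string k w) \<or> (a = k \<and> (\<exists>y. w = k # y \<and> pell_string k y))"
  by (auto elim: pell_string.cases intro: pell_string.intros)

lemma pell_string_letters: "pell_string k u \<Longrightarrow> set u \<subseteq> {0..k}"
  by (induction rule: pell_string.induct) auto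

lemma pell_string_if_mid_letters: "set u \<subseteq> {1..k-2} \<Longrightarrow> pell_string k u"
  by (induction u) (auto intro: pell_string.intros)

lemma finite_pell_vertices: "finite (pell_vertices n k)"
proof (rule finite_subset)
  show "pell_vertices n k \<subseteq> {u. set u \<subseteq> {0..k} \<and> length u = n}"
    using pell_string_letters by (auto simp: pell_vertices_def)
qed (rule finite_lists_length_eq[OF finite_atLeastAtMost])

lemma Cons_in_pell_vertices_iff:
  "a < k \<Longrightarrow> a # w \<in> pell_vertices (Suc n) k \<longleftrightarrow> w \<in> pell_vertices n k"
  by (simp add: pell_vertices_def pell_string_Cons)

lemma pell_step_length: "pell_step k u v \<Longrightarrow> length u = length v"
  by (auto simp: pell_step_def)

lemma pell_step_Nil: "\<not> pell_step k [] v" "\<not> pell_step k v []"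
  by (auto simp: pell_step_def)

lemma pell_step_Cons_Cons:
  "pell_step k (a # u) (b # v) \<longleftrightarrow>
     (a = b \<and> pell_step k u v) \<or> (u = v \<and> b = a + 1 \<and> a + 2 \<le> k)
   \<or> (a = k - 1 \<and> b = k \<and> (\<exists>y. u = (k - 1) # y \<and> v = k # y))"
  (is "?step \<longleftrightarrow> ?cases")
proof
  assume ?step
  then consider
      (letter) x y i where "i + 2 \<le> k" "a # u = x @ [i] @ y" "b # v = x @ [i + 1] @ y"
    | (block) x y where "a # u = x @ [k - 1, k - 1] @ y" "b # v = x @ [k, k] @ y"
    unfolding pell_step_def by blast
  then show ?cases
  proof cases
    case (letter x y i)
    then show ?thesis by (cases x) (auto simp: pell_step_def)
  next
    case (block x y)
    then show ?thesis by (cases x) (auto simp: pell_step_def)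
  qed
next
  assume ?cases
  then show ?step
    unfolding pell_step_def by (elim disjE conjE exE; metis append_Cons append_Nil)
qed

definition pell_nbrs :: "nat \<Rightarrow> nat list \<Rightarrow> nat list set" where
  "pell_nbrs k u = {v. pell_adj k u v}"

lemma pell_nbrs_subset_vertices: "pell_nbrs k u \<subseteq> pell_vertices (length u) k"
  by (auto simp: pell_nbrs_def pell_adj_def pell_vertices_def dest: pell_step_length)

lemma finite_pell_nbrs: "finite (pell_nbrs k u)"
  using finite_subset[OF pell_nbrs_subset_vertices finite_pell_vertices] .

lemma pell_degree_eq_card_nbrs:
  "u \<in> pell_vertices n k \<Longrightarrow> pell_degree n k u = card (pell_nbrs k u)"
  by (auto simp: pell_degree_def pell_vertices_def pell_nbrs_def pell_adj_def
      dest: pell_step_length intro!: arg_cong[where f = card])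

lemma pell_nbrs_Nil: "pell_nbrs k [] = {}"
  by (auto simp: pell_nbrs_def pell_adj_def pell_step_Nil)

definition head_moves :: "nat \<Rightarrow> nat \<Rightarrow> nat list \<Rightarrow> nat list set" where
  "head_moves k a w =
     {v. (0 < a \<and> v = (a - 1) # w) \<or> (a + 1 < k \<and> v = (a + 1) # w)
       \<or> (a = k - 1 \<and> (\<exists>y. w = (k - 1) # y \<and> v = k # k # y))}"

lemma head_moves_eq:
  "head_moves k a w =
     (if 0 < a then {(a - 1) # w} else {}) \<union> (if a + 1 < k then {(a + 1) # w} else {})
     \<union> (if a = k - 1 \<and> take 1 w = [k - 1] then {k # k # tl w} else {})"
  by (cases w) (auto simp: head_moves_def)

lemma finite_head_moves: "finite (head_moves k a w)"
  by (simp add: head_moves_eq)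

lemma pell_nbrs_Letter:
  assumes "a < k" "pell_string k w"
  shows "pell_nbrs k (a # w) = Cons a ` pell_nbrs k w \<union> head_moves k a w"
proof (rule set_eqI)
  fix v
  show "v \<in> pell_nbrs k (a # w) \<longleftrightarrow> v \<in> Cons a ` pell_nbrs k w \<union> head_moves k a w"
    using assms
    by (cases v) (auto simp: pell_nbrs_def pell_adj_def head_moves_def pell_step_Nil
        pell_step_Cons_Cons pell_string_Cons)
qed

lemma pell_nbrs_Double:
  assumes "pell_string k w"
  shows "pell_nbrs k (k # k # w) =
    Cons k ` Cons k ` pell_nbrs k w \<union> {(k - 1) # (k - 1) # w}"
proof (rule set_eqI)
  fix v
  show "v \<in> pell_nbrs k (k # k # w) \<longleftrightarrow>
      v \<in> Cons k ` Cons k ` pell_nbrs k w \<union> {(k - 1) # (k - 1) # w}"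
    using assms
    by (cases v; cases "tl v") (auto simp: pell_nbrs_def pell_adj_def pell_step_Nil
        pell_step_Cons_Cons pell_string_Cons)
qed

definition letter_degree :: "nat \<Rightarrow> nat \<Rightarrow> nat list \<Rightarrow> nat" where
  "letter_degree k a w =
     of_bool (0 < a) + of_bool (a + 1 < k) + of_bool (a = k - 1 \<and> take 1 w = [k - 1])"

lemma card_head_moves: "card (head_moves k a w) = letter_degree k a w"
  by (cases w) (auto simp: head_moves_eq letter_degree_def card_insert_if)

fun local_degree :: "nat \<Rightarrow> nat list \<Rightarrow> nat" where
  "local_degree k [] = 0"
| "local_degree k (a # w) =
     (if a = k then 1 + local_degree k (drop 1 w) else letter_degree k a w + local_degree k w)"

text \<open>For k = 0 the move 00 \<mapsto> 00 would be a loop, hence the hypothesis 0 < k.\<close>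
lemma card_pell_nbrs:
  "pell_string k u \<Longrightarrow> 0 < k \<Longrightarrow> card (pell_nbrs k u) = local_degree k u"
proof (induction rule: pell_string.induct)
  case Nil
  then show ?case by (simp add: pell_nbrs_Nil)
next
  case (Letter a w)
  have "Cons a ` pell_nbrs k w \<inter> head_moves k a w = {}"
    using Letter.hyps by (auto simp: head_moves_def)
  with Letter show ?case
    by (simp add: pell_nbrs_Letter card_Un_disjoint finite_pell_nbrs card_image
        card_head_moves finite_head_moves)
next
  case (Double w)
  have "(k - 1) # (k - 1) # w \<notin> Cons k ` Cons k ` pell_nbrs k w"
    using Double.prems by auto
  with Double show ?case
    by (simp add: pell_nbrs_Double finite_pell_nbrs card_image inj_on_def image_image)
qed

lemma pell_degree_eq_local_degree:
  "u \<in> pell_vertices n k \<Longrightarrow> 0 < k \<Longrightarrow> pell_degree n k u = local_degree k u"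
  by (simp add: pell_degree_eq_card_nbrs card_pell_nbrs pell_vertices_def)

text \<open>The extra summand pays for the merge move of a preceding letter k - 1.\<close>
lemma local_degree_le:
  "pell_string k u \<Longrightarrow> local_degree k u + of_bool (take 1 u = [k - 1]) \<le> 2 * length u"
  by (induction rule: pell_string.induct) (auto simp: letter_degree_def)

lemma local_degree_eq_twice_length_iff:
  "pell_string k u \<Longrightarrow> local_degree k u = 2 * length u \<longleftrightarrow> set u \<subseteq> {1..k-2}"
proof (induction rule: pell_string.induct)
  case (Letter a w)
  then show ?case
    using local_degree_le[OF Letter.hyps(2)] by (auto simp: letter_degree_def)
next
  case (Double w)
  then show ?case using local_degree_le[OF Double.hyps] by auto
qed simp

definition mid_words :: "nat \<Rightarrow> nat \<Rightarrow> nat list set" where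
  "mid_words k n = {u. set u \<subseteq> {1..k-2} \<and> length u = n}"

lemma finite_mid_words: "finite (mid_words k n)"
  unfolding mid_words_def by (simp add: finite_lists_length_eq)

lemma card_mid_words: "card (mid_words k n) = (k - 2) ^ n"
  unfolding mid_words_def by (simp add: card_lists_length_eq)

lemma mid_words_eq_max_degree:
  "mid_words k n = {u \<in> pell_vertices n k. local_degree k u = 2 * n}"
proof -
  have "set u \<subseteq> {1..k-2} \<longleftrightarrow> pell_string k u \<and> local_degree k u = 2 * length u" for u
    using local_degree_eq_twice_length_iff pell_string_if_mid_letters by blast
  then show ?thesis
    by (auto simp: mid_words_def pell_vertices_def)
qed

lemma pell_max_degree_eq:
  assumes "3 \<le> k"
  shows "pell_max_degree n k = 2 * n"
  unfolding pell_max_degree_def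
proof (rule Max_eqI)
  show "finite (pell_degree n k ` pell_vertices n k)"
    by (simp add: finite_pell_vertices)
  show "d \<le> 2 * n" if "d \<in> pell_degree n k ` pell_vertices n k" for d
    using that assms local_degree_le
    by (fastforce simp: pell_degree_eq_local_degree pell_vertices_def)
  have "replicate n 1 \<in> mid_words k n"
    using assms by (auto simp: mid_words_def)
  then show "2 * n \<in> pell_degree n k ` pell_vertices n k"
    using assms by (force simp: mid_words_eq_max_degree pell_degree_eq_local_degree)
qed

lemma letter_degree_bottom: "2 \<le> k \<Longrightarrow> letter_degree k 0 w = 1"
  by (simp add: letter_degree_def)

lemma letter_degree_mid: "a \<in> {1..k-2} \<Longrightarrow> letter_degree k a w = 2"
  by (auto simp: letter_degree_def)

lemma mid_words_take1_ne_top: "u \<in> mid_words k n \<Longrightarrow> 2 \<le> k \<Longrightarrow> take 1 u \<noteq> [k - 1]"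
  by (cases u) (auto simp: mid_words_def)

definition deficient_words :: "nat \<Rightarrow> nat \<Rightarrow> nat list set" where
  "deficient_words k n = {u \<in> pell_vertices n k. local_degree k u + 1 = 2 * n}"

definition deficient_words_top :: "nat \<Rightarrow> nat \<Rightarrow> nat list set" where
  "deficient_words_top k n = {u \<in> deficient_words k n. take 1 u = [k - 1]}"

lemma finite_deficient_words: "finite (deficient_words k n)"
  unfolding deficient_words_def using finite_pell_vertices by simp

lemma finite_deficient_words_top: "finite (deficient_words_top k n)"
  unfolding deficient_words_top_def using finite_deficient_words by simp

lemma Cons_in_deficient_words_iff:
  "a < k \<Longrightarrow> a # w \<in> deficient_words k (Suc n) \<longleftrightarrow>
     w \<in> pell_vertices n k \<and> letter_degree k a w + local_degree k w = 2 * n + 1"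
  by (auto simp: deficient_words_def Cons_in_pell_vertices_iff)

lemma deficient_words_top_Suc:
  assumes "3 \<le> k"
  shows "deficient_words_top k (Suc n) =
    Cons (k - 1) ` (deficient_words_top k n \<union> mid_words k n)"
proof (intro set_eqI iffI)
  fix u
  assume u: "u \<in> deficient_words_top k (Suc n)"
  then obtain w where u_eq: "u = (k - 1) # w"
    by (cases u) (auto simp: deficient_words_top_def)
  with u assms have w: "w \<in> pell_vertices n k"
    and deg: "of_bool (take 1 w = [k - 1]) + local_degree k w = 2 * n"
    by (auto simp: deficient_words_top_def Cons_in_deficient_words_iff letter_degree_def)
  have "local_degree k w + of_bool (take 1 w = [k - 1]) \<le> 2 * n"
    using local_degree_le[of k w] w by (simp add: pell_vertices_def)
  with w deg have "w \<in> deficient_words_top k n \<union> mid_words k n"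
    by (cases "take 1 w = [k - 1]")
      (auto simp: deficient_words_top_def deficient_words_def mid_words_eq_max_degree)
  with u_eq show "u \<in> Cons (k - 1) ` (deficient_words_top k n \<union> mid_words k n)"
    by blast
next
  fix u
  assume "u \<in> Cons (k - 1) ` (deficient_words_top k n \<union> mid_words k n)"
  then obtain w where u: "u = (k - 1) # w" and "w \<in> deficient_words_top k n \<union> mid_words k n"
    by blast
  then consider "w \<in> deficient_words_top k n" | "w \<in> mid_words k n" "take 1 w \<noteq> [k - 1]"
    using assms mid_words_take1_ne_top by fastforce
  then show "u \<in> deficient_words_top k (Suc n)"
    using assms
    by cases (auto simp: u deficient_words_top_def deficient_words_def letter_degree_def
        Cons_in_deficient_words_iff Cons_in_pell_vertices_iff mid_words_eq_max_degree)
qed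

lemma deficient_words_Suc:
  assumes "3 \<le> k"
  shows "deficient_words k (Suc n) =
    Cons 0 ` mid_words k n \<union> (\<lambda>(a, w). a # w) ` ({1..k-2} \<times> deficient_words k n)
    \<union> deficient_words_top k (Suc n)" (is "_ = ?rhs")
proof (intro set_eqI iffI)
  fix u
  assume u: "u \<in> deficient_words k (Suc n)"
  then obtain a w where u_eq: "u = a # w" and pu: "pell_string k u"
    and deg: "local_degree k u + 1 = 2 * Suc n" and len: "length w = n"
    by (cases u) (auto simp: deficient_words_def pell_vertices_def)
  have "a \<noteq> k"
  proof
    assume "a = k"
    then obtain y where "w = k # y" "pell_string k y"
      using pu u_eq by (auto simp: pell_string_Cons)
    then show False
      using local_degree_le[of k y] deg len u_eq \<open>a = k\<close> by simp
  qed
  with pu u_eq len have a: "a < k" and w: "w \<in> pell_vertices n k"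
    by (auto simp: pell_string_Cons pell_vertices_def)
  with u u_eq have deg_w: "letter_degree k a w + local_degree k w = 2 * n + 1"
    by (simp add: Cons_in_deficient_words_iff)
  consider "a = 0" | "a \<in> {1..k-2}" | "a = k - 1"
    using a by fastforce
  then show "u \<in> ?rhs"
  proof cases
    case 1
    with assms deg_w w have "w \<in> mid_words k n"
      by (simp add: letter_degree_bottom mid_words_eq_max_degree)
    with 1 u_eq show ?thesis by blast
  next
    case 2
    with deg_w w have "w \<in> deficient_words k n"
      by (simp add: letter_degree_mid deficient_words_def)
    with 2 u_eq show ?thesis by force
  next
    case 3
    with u u_eq show ?thesis by (simp add: deficient_words_top_def)
  qed
next
  fix u
  assume "u \<in> ?rhs"
  then show "u \<in> deficient_words k (Suc n)"
    using assms
    by (auto simp: deficient_words_top_def deficient_words_def Cons_in_deficient_words_iff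
        Cons_in_pell_vertices_iff letter_degree_bottom letter_degree_mid mid_words_eq_max_degree)
qed

lemma card_deficient_words_top:
  assumes "3 \<le> k"
  shows "card (deficient_words_top k n) = (\<Sum>j<n. (k - 2) ^ j)"
proof (induction n)
  case 0
  then show ?case by (simp add: deficient_words_top_def deficient_words_def)
next
  case (Suc n)
  have "deficient_words_top k n \<inter> mid_words k n = {}"
    using assms mid_words_take1_ne_top by (auto simp: deficient_words_top_def)
  then have "card (deficient_words_top k n \<union> mid_words k n) =
      card (deficient_words_top k n) + (k - 2) ^ n"
    by (simp add: card_Un_disjoint finite_deficient_words_top finite_mid_words card_mid_words)
  then show ?case
    using Suc.IH by (simp add: deficient_words_top_Suc[OF assms] card_image)
qed

lemma card_deficient_words_Suc:
  assumes "3 \<le> k"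
  shows "card (deficient_words k (Suc n)) =
    (k - 2) ^ n + (k - 2) * card (deficient_words k n) + card (deficient_words_top k (Suc n))"
proof -
  let ?P = "(\<lambda>(a, w). a # w) ` ({1..k-2} \<times> deficient_words k n)"
  have "inj_on (\<lambda>(a, w). a # w) ({1..k-2} \<times> deficient_words k n)"
    by (auto simp: inj_on_def)
  then have "card ?P = (k - 2) * card (deficient_words k n)"
    by (simp add: card_image card_cartesian_product)
  moreover have "Cons 0 ` mid_words k n \<inter> ?P = {}"
    by auto
  moreover have "(Cons 0 ` mid_words k n \<union> ?P) \<inter> deficient_words_top k (Suc n) = {}"
    using assms by (auto simp: deficient_words_top_def)
  ultimately show ?thesis
    unfolding deficient_words_Suc[OF assms]
    by (simp add: card_Un_disjoint Int_Un_distrib2 finite_mid_words finite_deficient_words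
        finite_deficient_words_top card_image card_mid_words)
qed

lemma sum_weighted_powers_Suc:
  "(\<Sum>j<Suc n. (j + 1) * m ^ j) = (\<Sum>j<Suc n. m ^ j) + m * (\<Sum>j<n. (j + 1) * (m::nat) ^ j)"
  by (simp add: sum.distrib sum_distrib_left sum.lessThan_Suc_shift algebra_simps
      del: sum.lessThan_Suc)

lemma card_deficient_words:
  assumes "3 \<le> k"
  shows "card (deficient_words k n) =
    n * (k - 2) ^ (n - 1) + (\<Sum>j<n. (j + 1) * (k - 2) ^ j)"
proof (induction n)
  case 0
  then show ?case by (simp add: deficient_words_def)
next
  case (Suc n)
  define m where "m = k - 2"
  have "m * (n * m ^ (n - 1)) = n * m ^ n"
    by (cases n) (simp_all add: algebra_simps)
  with Suc.IH show ?case
    unfolding card_deficient_words_Suc[OF assms] card_deficient_words_top[OF assms]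
      m_def[symmetric] sum_weighted_powers_Suc
    by (simp add: algebra_simps)
qed

theorem corollary5p6:
  fixes n k :: nat
  assumes "n \<ge> 1" and "k \<ge> 3"
  shows "pell_max_degree n k - 1 = 2 * n - 1 \<and>
         card {u \<in> pell_vertices n k. pell_degree n k u = pell_max_degree n k - 1}
           = n * (k - 2) ^ (n - 1) + (\<Sum>l = 1..n. (n - l + 1) * (k - 2) ^ (n - l))"
proof
  show "pell_max_degree n k - 1 = 2 * n - 1"
    using pell_max_degree_eq[OF assms(2)] by simp
  have "{u \<in> pell_vertices n k. pell_degree n k u = pell_max_degree n k - 1} =
      deficient_words k n"
    using assms
    by (auto simp: pell_max_degree_eq pell_degree_eq_local_degree deficient_words_def)
  moreover have "(\<Sum>l = 1..n. (n - l + 1) * (k - 2) ^ (n - l)) =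
      (\<Sum>j<n. (j + 1) * (k - 2) ^ j)"
    by (rule sum.reindex_bij_witness[of _ "\<lambda>j. n - j" "\<lambda>l. n - l"]) auto
  ultimately show "card {u \<in> pell_vertices n k. pell_degree n k u = pell_max_degree n k - 1}
      = n * (k - 2) ^ (n - 1) + (\<Sum>l = 1..n. (n - l + 1) * (k - 2) ^ (n - l))"
    using card_deficient_words[OF assms(2)] by simp
qed

end
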